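(* Let $n=2$, assume Assumptions A and B and $c_1^2+c_2^2>0$, and let $S$ be a solution of (IVP) on $[r_0,\infty)$ with $s_\infty=\lim_{r\to\infty}S(r)$. Then: (i) if $c_1\le0$ and $c_2\ge0$, then $s_\infty=1$; (ii) if $c_1\ge0$ and $c_2\le0$, then $s_\infty=0$; (iii) if $c_1,c_2<0$, then $s_\infty=s^*$; (iv) if $c_1,c_2>0$, then $s_\infty\in\{0,1,s^*\}$.
   Context: For $i=1,2$, $g_i(s)=a^{(i)}_0+a^{(i)}_1s^{\alpha^{(i)}_1}+\dots+a^{(i)}_{N_i}s^{\alpha^{(i)}_{N_i}}$ ($s\ge0$) with $N_i\ge0$, $a^{(i)}_0>0$, $a^{(i)}_j\ge0$, real $0<\alpha^{(i)}_1<\dots<\alpha^{(i)}_{N_i}$; $G_i(u)=g_i(|u|)u$ for $u\in\mathbb R$. Assumption A: $f_1,f_2\in C([0,1])\cap C^1((0,1))$, $f_1(0)=0$, $f_2(1)=0$, $f_1'>0$, $f_2'<0$ on $(0,1)$. Assumption B: $p_c'\in C^1((0,1))$, $p_c'>0$ on $(0,1)$. $F_i(S)=1/(p_c'(S)f_i(S))$. (IVP) with dimension $n$: $S'(r)=G_2(c_2r^{1-n})F_2(S)-G_1(c_1r^{1-n})F_1(S)$ for $r>r_0$, $S(r_0)=s_0\in(0,1)$, $0<S<1$. The limit $s_\infty$ exists for any solution on $[r_0,\infty)$. $f=f_1/f_2$ is a strictly increasing bijection $(0,1)\to(0,\infty)$; when $c_1c_2>0$, $s^*=f^{-1}\big(c_1a^{(1)}_0/(c_2a^{(2)}_0)\big)\in(0,1)$.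 *)

theory Defs
  imports "HOL-Analysis.Analysis"
begin

definition gfun :: "real \<Rightarrow> (nat \<Rightarrow> real) \<Rightarrow> (nat \<Rightarrow> real) \<Rightarrow> nat \<Rightarrow> real \<Rightarrow> real" where
  "gfun a0 a \<alpha> N s = a0 + (\<Sum>j=1..N. a j * s powr \<alpha> j)"

definition Gfun :: "real \<Rightarrow> (nat \<Rightarrow> real) \<Rightarrow> (nat \<Rightarrow> real) \<Rightarrow> nat \<Rightarrow> real \<Rightarrow> real" where
  "Gfun a0 a \<alpha> N u = gfun a0 a \<alpha> N \<bar>u\<bar> * u"

definition admissible_g :: "real \<Rightarrow> (nat \<Rightarrow> real) \<Rightarrow> (nat \<Rightarrow> real) \<Rightarrow> nat \<Rightarrow> bool" where
  "admissible_g a0 a \<alpha> N \<longleftrightarrow> a0 > 0 \<and> (\<forall>j\<in>{1..N}. a j \<ge> 0) \<and>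
     (N \<ge> 1 \<longrightarrow> \<alpha> 1 > 0) \<and> (\<forall>j\<in>{1..<N}. \<alpha> j < \<alpha> (Suc j))"

definition sstar :: "(real \<Rightarrow> real) \<Rightarrow> (real \<Rightarrow> real) \<Rightarrow> real \<Rightarrow> real \<Rightarrow> real \<Rightarrow> real \<Rightarrow> real" where
  "sstar f1 f2 c1 c2 a01 a02 =
     (THE s. s \<in> {0<..<1} \<and> f1 s / f2 s = c1 * a01 / (c2 * a02))"

end

theory Submission
  imports Defs
begin

(* With h_i(r) = r G_i(c_i/r), the equation reads r p_c'(S) S' = h_2/f_2(S) - h_1/f_1(S), and
   h_i(r) tends to a_0^(i) c_i while keeping the sign of c_i.  If s_inf lies in (0,1), then
   r S'(r) converges, and a nonzero limit would make S grow like log r; so the two terms balance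
   in the limit, which is the equation f(s_inf) = c_1 a_0^(1) / (c_2 a_0^(2)) defining s*.
   If c_1 <= 0 <= c_2 then S is nondecreasing, so s_inf > 0, and the balance is impossible
   unless c_1 = c_2 = 0; hence s_inf = 1.  If c_1 < 0, then -h_1/f_1(S) blows up as S -> 0,
   so S is eventually increasing and cannot tend to 0.  The substitution S -> 1 - S exchanges
   the two phases and gives the symmetric statements. *)

lemma eventually_mono_on_if_deriv_nonneg:
  fixes S S' :: "real \<Rightarrow> real"
  assumes "\<forall>\<^sub>F r in at_top. (S has_real_derivative S' r) (at r) \<and> S' r \<ge> 0"
  shows "\<exists>R. mono_on {R..} S"
proof -
  obtain R where R: "\<And>r. r \<ge> R \<Longrightarrow> (S has_real_derivative S' r) (at r) \<and> S' r \<ge> 0"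
    using assms by (auto simp: eventually_at_top_linorder)
  have "mono_on {R..} S"
  proof (rule mono_onI)
    fix x y assume xy: "x \<in> {R..}" "y \<in> {R..}" "x \<le> y"
    show "S x \<le> S y"
    proof (rule DERIV_nonneg_imp_nondecreasing[OF xy(3)])
      fix t assume "x \<le> t" "t \<le> y"
      then have "t \<ge> R" using xy(1) by simp
      then show "\<exists>d. (S has_real_derivative d) (at t) \<and> d \<ge> 0" using R by blast
    qed
  qed
  then show ?thesis ..
qed

lemma eventually_le_limit_if_deriv_nonneg:
  fixes S S' :: "real \<Rightarrow> real"
  assumes "\<forall>\<^sub>F r in at_top. (S has_real_derivative S' r) (at r) \<and> S' r \<ge> 0"
    and "(S \<longlongrightarrow> l) at_top"
  shows "\<forall>\<^sub>F r in at_top. S r \<le> l"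
proof -
  obtain R where mono: "mono_on {R..} S"
    using eventually_mono_on_if_deriv_nonneg[OF assms(1)] ..
  have "S r \<le> l" if "r \<ge> R" for r
  proof (rule tendsto_lowerbound[OF assms(2)])
    show "\<forall>\<^sub>F x in at_top. S r \<le> S x"
      using eventually_ge_at_top[of r] by eventually_elim (rule mono_onD[OF mono], use that in auto)
  qed simp
  then show ?thesis by (auto simp: eventually_at_top_linorder)
qed

lemma mult_deriv_limit_nonpos_if_convergent:
  fixes S S' :: "real \<Rightarrow> real"
  assumes der: "\<forall>\<^sub>F r in at_top. (S has_real_derivative S' r) (at r)"
    and K: "((\<lambda>r. r * S' r) \<longlongrightarrow> K) at_top"
    and l: "(S \<longlongrightarrow> l) at_top"
  shows "K \<le> 0"
proof (rule ccontr)
  assume "\<not> K \<le> 0"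
  then have "K > 0" by simp
  then have "K / 2 < K" by simp
  define \<phi> where "\<phi> r = S r - K / 2 * ln r" for r
  have deriv: "\<forall>\<^sub>F r in at_top. (\<phi> has_real_derivative S' r - K / 2 * (1 / r)) (at r)
                          \<and> S' r - K / 2 * (1 / r) \<ge> 0"
    using der order_tendstoD(1)[OF K \<open>K / 2 < K\<close>] eventually_gt_at_top[of 0]
  proof eventually_elim
    case (elim r)
    have "(\<phi> has_real_derivative S' r - K / 2 * (1 / r)) (at r)"
      unfolding \<phi>_def using elim by (intro derivative_eq_intros) auto
    moreover have "S' r \<ge> K / 2 * (1 / r)" using elim by (simp add: field_simps)
    ultimately show ?case by simp
  qed
  obtain R where mono: "mono_on {R..} \<phi>"
    using eventually_mono_on_if_deriv_nonneg[OF deriv] by blast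
  have "LIM r at_top. \<phi> R + K / 2 * ln r :> at_top"
    using \<open>K > 0\<close> by (intro filterlim_tendsto_add_at_top[OF tendsto_const]
        filterlim_tendsto_pos_mult_at_top[OF tendsto_const _ ln_at_top]) simp
  moreover have "\<forall>\<^sub>F r in at_top. \<phi> R + K / 2 * ln r \<le> S r"
    using eventually_ge_at_top[of R]
  proof eventually_elim
    case (elim r)
    then have "\<phi> R \<le> \<phi> r" by (intro mono_onD[OF mono]) auto
    then show ?case by (simp add: \<phi>_def)
  qed
  ultimately have "LIM r at_top. S r :> at_top" by (rule filterlim_at_top_mono)
  then have "filterlim S at_infinity at_top" by (rule filterlim_at_top_imp_at_infinity)
  with trivial_limit_at_top_linorder l show False by (rule not_tendsto_and_filterlim_at_infinity)
qed

lemma mult_deriv_limit_eq_0_if_convergent: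
  fixes S S' :: "real \<Rightarrow> real"
  assumes "\<forall>\<^sub>F r in at_top. (S has_real_derivative S' r) (at r)"
    and "((\<lambda>r. r * S' r) \<longlongrightarrow> K) at_top"
    and "(S \<longlongrightarrow> l) at_top"
  shows "K = 0"
proof -
  have "\<forall>\<^sub>F r in at_top. ((\<lambda>r. - S r) has_real_derivative - S' r) (at r)"
    using assms(1) by (auto elim: eventually_mono intro: derivative_intros)
  moreover have "((\<lambda>r. r * - S' r) \<longlongrightarrow> - K) at_top" using tendsto_minus[OF assms(2)] by simp
  ultimately have "- K \<le> 0"
    using tendsto_minus[OF assms(3)] by (rule mult_deriv_limit_nonpos_if_convergent)
  with mult_deriv_limit_nonpos_if_convergent[OF assms] show ?thesis by simp
qed

lemma admissible_g_exponent_pos: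
  assumes "admissible_g a0 a \<alpha> N" and "j \<in> {1..N}"
  shows "\<alpha> j > 0"
proof -
  have "1 \<le> j" "j \<le> N" using assms(2) by auto
  then show ?thesis
  proof (induction j rule: dec_induct)
    case base
    then show ?case using assms(1) unfolding admissible_g_def by simp
  next
    case (step n)
    then have "\<alpha> n < \<alpha> (Suc n)" using assms(1) unfolding admissible_g_def by auto
    with step show ?case by simp
  qed
qed

lemma gfun_ge_a0:
  assumes "admissible_g a0 a \<alpha> N" and "s \<ge> 0"
  shows "a0 \<le> gfun a0 a \<alpha> N s"
proof -
  have "(\<Sum>j=1..N. a j * s powr \<alpha> j) \<ge> 0"
    using assms unfolding admissible_g_def by (intro sum_nonneg) auto
  then show ?thesis unfolding gfun_def by simp
qed

lemma scaled_Gfun_eq: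
  assumes "r > 0"
  shows "r * Gfun a0 a \<alpha> N (c * r powr (1 - 2)) = c * gfun a0 a \<alpha> N (\<bar>c\<bar> / r)"
proof -
  have "r powr (1 - 2) = 1 / r" using assms by (simp add: powr_minus_divide)
  then show ?thesis using assms unfolding Gfun_def by (simp add: abs_mult)
qed

lemma scaled_Gfun_sign_iff:
  assumes "admissible_g a0 a \<alpha> N" and "r > 0"
  shows "r * Gfun a0 a \<alpha> N (c * r powr (1 - 2)) \<le> 0 \<longleftrightarrow> c \<le> 0"
    and "0 \<le> r * Gfun a0 a \<alpha> N (c * r powr (1 - 2)) \<longleftrightarrow> 0 \<le> c"
proof -
  have "gfun a0 a \<alpha> N (\<bar>c\<bar> / r) > 0"
    using gfun_ge_a0[OF assms(1), of "\<bar>c\<bar> / r"] assms unfolding admissible_g_def by simp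
  then show "r * Gfun a0 a \<alpha> N (c * r powr (1 - 2)) \<le> 0 \<longleftrightarrow> c \<le> 0"
    and "0 \<le> r * Gfun a0 a \<alpha> N (c * r powr (1 - 2)) \<longleftrightarrow> 0 \<le> c"
    unfolding scaled_Gfun_eq[OF assms(2)] by (simp_all add: mult_le_0_iff zero_le_mult_iff)
qed

lemma tendsto_scaled_Gfun:
  assumes "admissible_g a0 a \<alpha> N"
  shows "((\<lambda>r. r * Gfun a0 a \<alpha> N (c * r powr (1 - 2))) \<longlongrightarrow> c * a0) at_top"
proof -
  have lim0: "((\<lambda>r::real. \<bar>c\<bar> / r) \<longlongrightarrow> 0) at_top"
    by (intro tendsto_divide_0[OF tendsto_const] filterlim_at_top_imp_at_infinity filterlim_ident)
  have "((\<lambda>r. gfun a0 a \<alpha> N (\<bar>c\<bar> / r)) \<longlongrightarrow> a0 + (\<Sum>j=1..N. a j * 0)) at_top"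
    unfolding gfun_def
  proof (intro tendsto_add tendsto_const tendsto_sum tendsto_mult)
    fix j assume "j \<in> {1..N}"
    then have "\<alpha> j > 0" using admissible_g_exponent_pos assms by blast
    then show "((\<lambda>r. (\<bar>c\<bar> / r) powr \<alpha> j) \<longlongrightarrow> 0) at_top"
      by (intro tendsto_zero_powrI[OF lim0 tendsto_const])
        (auto intro: eventually_mono[OF eventually_ge_at_top[of 0]])
  qed
  then have "((\<lambda>r. c * gfun a0 a \<alpha> N (\<bar>c\<bar> / r)) \<longlongrightarrow> c * a0) at_top"
    by (auto intro: tendsto_mult tendsto_const)
  moreover have "\<forall>\<^sub>F r in at_top. c * gfun a0 a \<alpha> N (\<bar>c\<bar> / r) = r * Gfun a0 a \<alpha> N (c * r powr (1 - 2))"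
    using eventually_gt_at_top[of 0] by eventually_elim (rule scaled_Gfun_eq[symmetric])
  ultimately show ?thesis by (rule Lim_transform_eventually)
qed

lemma strict_mono_on_if_deriv_pos:
  fixes f f' :: "real \<Rightarrow> real"
  assumes "continuous_on {a..b} f"
    and "\<And>x. x \<in> {a<..<b} \<Longrightarrow> (f has_real_derivative f' x) (at x)"
    and "\<And>x. x \<in> {a<..<b} \<Longrightarrow> f' x > 0"
  shows "strict_mono_on {a..b} f"
proof (rule strict_mono_onI)
  fix x y assume xy: "x \<in> {a..b}" "y \<in> {a..b}" "x < y"
  show "f x < f y"
  proof (rule DERIV_pos_imp_increasing_open[OF \<open>x < y\<close>])
    show "continuous_on {x..y} f" using xy by (intro continuous_on_subset[OF assms(1)]) auto
  qed (use xy assms(2,3) in force)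
qed

lemma strict_antimono_on_if_deriv_neg:
  fixes f f' :: "real \<Rightarrow> real"
  assumes "continuous_on {a..b} f"
    and "\<And>x. x \<in> {a<..<b} \<Longrightarrow> (f has_real_derivative f' x) (at x)"
    and "\<And>x. x \<in> {a<..<b} \<Longrightarrow> f' x < 0"
  shows "strict_antimono_on {a..b} f"
proof -
  have "strict_mono_on {a..b} (\<lambda>x. - f x)"
    using assms by (intro strict_mono_on_if_deriv_pos[where f' = "\<lambda>x. - f' x"])
      (auto intro: continuous_intros derivative_intros)
  then show ?thesis by (auto simp: monotone_on_def)
qed

(* h_i r stands for r G_i(c_i r^(1-n)) with n = 2, d for p_c', and k_i for the limit of h_i. *)
locale radial_two_phase_flow =
  fixes f1 f2 d h1 h2 S S' :: "real \<Rightarrow> real" and r0 k1 k2 l :: real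
  assumes f1_mono: "strict_mono_on {0..1} f1" and f1_cont: "continuous_on {0..1} f1"
    and f1_0: "f1 0 = 0"
    and f2_antimono: "strict_antimono_on {0..1} f2" and f2_cont: "continuous_on {0..1} f2"
    and f2_1: "f2 1 = 0"
    and d_cont: "continuous_on {0<..<1} d" and d_pos: "\<And>s. s \<in> {0<..<1} \<Longrightarrow> d s > 0"
    and r0_pos: "r0 > 0"
    and S_der: "\<And>r. r > r0 \<Longrightarrow> (S has_real_derivative S' r) (at r)"
    and S_ode: "\<And>r. r > r0 \<Longrightarrow> S' r = (h2 r / f2 (S r) - h1 r / f1 (S r)) / (r * d (S r))"
    and S_range: "\<And>r. r \<ge> r0 \<Longrightarrow> S r \<in> {0<..<1}"
    and S_lim: "(S \<longlongrightarrow> l) at_top"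
    and h1_lim: "(h1 \<longlongrightarrow> k1) at_top" and h2_lim: "(h2 \<longlongrightarrow> k2) at_top"
begin

lemma f1_pos: "s \<in> {0<..1} \<Longrightarrow> f1 s > 0"
  using strict_mono_onD[OF f1_mono, of 0 s] f1_0 by simp

lemma f2_pos: "s \<in> {0..<1} \<Longrightarrow> f2 s > 0"
  using monotone_onD[OF f2_antimono, of s 1] f2_1 by simp

lemma ratio_strict_mono: "strict_mono_on {0<..<1} (\<lambda>s. f1 s / f2 s)"
proof (rule strict_mono_onI)
  fix x y :: real assume xy: "x \<in> {0<..<1}" "y \<in> {0<..<1}" "x < y"
  have "f1 x / f2 x < f1 y / f2 x"
    using strict_mono_onD[OF f1_mono, of x y] f2_pos[of x] xy by (intro divide_strict_right_mono) auto
  also have "\<dots> < f1 y / f2 y"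
    using f2_antimono f2_pos[of x] f2_pos[of y] f1_pos[of y] xy
    by (intro divide_strict_left_mono) (auto simp: monotone_on_def)
  finally show "f1 x / f2 x < f1 y / f2 y" .
qed

lemma sstar_eqI:
  assumes "s \<in> {0<..<1}" and "f1 s / f2 s = c1 * a01 / (c2 * a02)"
  shows "sstar f1 f2 c1 c2 a01 a02 = s"
  unfolding sstar_def
proof (rule the_equality)
  fix t assume t: "t \<in> {0<..<1} \<and> f1 t / f2 t = c1 * a01 / (c2 * a02)"
  show "t = s"
  proof (rule inj_onD[OF strict_mono_on_imp_inj_on[OF ratio_strict_mono]])
    show "f1 t / f2 t = f1 s / f2 s" using t assms(2) by simp
  qed (use t assms(1) in simp_all)
qed (use assms in simp)

lemma eventually_S_in_unit_interval: "\<forall>\<^sub>F r in at_top. S r \<in> {0..1}"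
  using eventually_ge_at_top[of r0] by eventually_elim (use S_range in force)

lemma limit_in_unit_interval: "l \<in> {0..1}"
  by (rule Lim_in_closed_set[OF closed_atLeastAtMost eventually_S_in_unit_interval _ S_lim]) simp

lemma tendsto_f1_S: "((\<lambda>r. f1 (S r)) \<longlongrightarrow> f1 l) at_top"
  by (rule continuous_on_tendsto_compose[OF f1_cont S_lim limit_in_unit_interval eventually_S_in_unit_interval])

lemma tendsto_f2_S: "((\<lambda>r. f2 (S r)) \<longlongrightarrow> f2 l) at_top"
  by (rule continuous_on_tendsto_compose[OF f2_cont S_lim limit_in_unit_interval eventually_S_in_unit_interval])

lemma deriv_nonneg_iff:
  assumes "r > r0"
  shows "S' r \<ge> 0 \<longleftrightarrow> h1 r / f1 (S r) \<le> h2 r / f2 (S r)"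
proof -
  have "r * d (S r) > 0" using assms r0_pos d_pos S_range[of r] by simp
  then show ?thesis unfolding S_ode[OF assms] by (simp add: zero_le_divide_iff)
qed

lemma limit_pos_if_eventually_nondecreasing:
  assumes "\<forall>\<^sub>F r in at_top. h1 r / f1 (S r) \<le> h2 r / f2 (S r)"
  shows "l > 0"
proof -
  have "\<forall>\<^sub>F r in at_top. (S has_real_derivative S' r) (at r) \<and> S' r \<ge> 0"
    using assms eventually_gt_at_top[of r0]
    by eventually_elim (use S_der deriv_nonneg_iff in blast)
  then have "\<forall>\<^sub>F r in at_top. S r \<le> l" by (rule eventually_le_limit_if_deriv_nonneg[OF _ S_lim])
  then have "\<forall>\<^sub>F r in at_top. S r \<le> l \<and> r \<ge> r0" using eventually_ge_at_top by (rule eventually_conj)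
  then have "\<exists>r. S r \<le> l \<and> r \<ge> r0" by (rule eventually_happens'[OF trivial_limit_at_top_linorder])
  then show ?thesis using S_range by force
qed

lemma tendsto_mult_deriv:
  assumes "l \<in> {0<..<1}"
  shows "((\<lambda>r. r * S' r) \<longlongrightarrow> (k2 / f2 l - k1 / f1 l) / d l) at_top"
proof -
  have dS: "((\<lambda>r. d (S r)) \<longlongrightarrow> d l) at_top"
    using assms d_cont by (intro isCont_tendsto_compose[OF _ S_lim]) (simp add: continuous_on_eq_continuous_at)
  have "f1 l > 0" "f2 l > 0" "d l > 0" using assms f1_pos f2_pos d_pos by auto
  then have "((\<lambda>r. (h2 r / f2 (S r) - h1 r / f1 (S r)) / d (S r)) \<longlongrightarrow> (k2 / f2 l - k1 / f1 l) / d l) at_top"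
    by (intro tendsto_divide tendsto_diff h1_lim h2_lim tendsto_f1_S tendsto_f2_S dS) simp_all
  moreover have "\<forall>\<^sub>F r in at_top. (h2 r / f2 (S r) - h1 r / f1 (S r)) / d (S r) = r * S' r"
    using eventually_gt_at_top[of r0] by eventually_elim (use r0_pos in \<open>simp add: S_ode\<close>)
  ultimately show ?thesis by (rule Lim_transform_eventually)
qed

lemma eventually_S_has_derivative: "\<forall>\<^sub>F r in at_top. (S has_real_derivative S' r) (at r)"
  using eventually_gt_at_top[of r0] by eventually_elim (rule S_der)

lemma interior_limit_balance:
  assumes "l \<in> {0<..<1}"
  shows "k1 / f1 l = k2 / f2 l"
proof -
  have "(k2 / f2 l - k1 / f1 l) / d l = 0"
    using eventually_S_has_derivative tendsto_mult_deriv[OF assms] S_lim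
    by (rule mult_deriv_limit_eq_0_if_convergent)
  then show ?thesis using d_pos[OF assms] by simp
qed

lemma limit_pos_if_k1_neg:
  assumes "k1 < 0"
  shows "l > 0"
proof (rule ccontr)
  assume "\<not> l > 0"
  then have l0: "l = 0" using limit_in_unit_interval by simp
  have "((\<lambda>r. f1 (S r)) \<longlongrightarrow> 0) at_top"
    using tendsto_f1_S l0 f1_0 by simp
  moreover have "\<forall>\<^sub>F r in at_top. f1 (S r) > 0"
    using eventually_ge_at_top[of r0] by eventually_elim (use S_range f1_pos in force)
  ultimately have "LIM r at_top. inverse (f1 (S r)) :> at_top"
    by (rule filterlim_inverse_at_top)
  then have "LIM r at_top. - h1 r * inverse (f1 (S r)) :> at_top"
    using assms by (intro filterlim_tendsto_pos_mult_at_top[OF tendsto_minus[OF h1_lim]]) auto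
  moreover have "((\<lambda>r. h2 r / f2 (S r)) \<longlongrightarrow> k2 / f2 0) at_top"
    using tendsto_f2_S f2_pos[of 0] unfolding l0 by (intro tendsto_divide h2_lim) auto
  ultimately have "LIM r at_top. h2 r / f2 (S r) + - h1 r * inverse (f1 (S r)) :> at_top"
    by (rule filterlim_tendsto_add_at_top[rotated])
  then have "\<forall>\<^sub>F r in at_top. 0 \<le> h2 r / f2 (S r) + - h1 r * inverse (f1 (S r))"
    unfolding filterlim_at_top by blast
  then have "\<forall>\<^sub>F r in at_top. h1 r / f1 (S r) \<le> h2 r / f2 (S r)"
    by eventually_elim (simp add: divide_inverse)
  from limit_pos_if_eventually_nondecreasing[OF this] show False using l0 by simp
qed

lemma reflected:
  "radial_two_phase_flow (\<lambda>s. f2 (1 - s)) (\<lambda>s. f1 (1 - s)) (\<lambda>s. d (1 - s)) h2 h1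
     (\<lambda>r. 1 - S r) (\<lambda>r. - S' r) r0 k2 k1 (1 - l)"
proof unfold_locales
  show "strict_mono_on {0..1} (\<lambda>s. f2 (1 - s))" using f2_antimono by (auto simp: monotone_on_def)
  show "strict_antimono_on {0..1} (\<lambda>s. f1 (1 - s))" using f1_mono by (auto simp: monotone_on_def)
  show "continuous_on {0..1} (\<lambda>s. f2 (1 - s))"
    by (rule continuous_on_compose2[OF f2_cont]) (auto intro: continuous_intros)
  show "continuous_on {0..1} (\<lambda>s. f1 (1 - s))"
    by (rule continuous_on_compose2[OF f1_cont]) (auto intro: continuous_intros)
  show "continuous_on {0<..<1} (\<lambda>s. d (1 - s))"
    by (rule continuous_on_compose2[OF d_cont]) (auto intro: continuous_intros)
  fix r assume "r > r0"
  show "((\<lambda>r. 1 - S r) has_real_derivative - S' r) (at r)"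
    using S_der[OF \<open>r > r0\<close>] by (auto intro: derivative_eq_intros)
  show "- S' r = (h1 r / f1 (1 - (1 - S r)) - h2 r / f2 (1 - (1 - S r))) / (r * d (1 - (1 - S r)))"
    by (simp add: S_ode[OF \<open>r > r0\<close>] minus_divide_left)
qed (use f1_0 f2_1 d_pos r0_pos S_range S_lim h1_lim h2_lim in \<open>auto intro: tendsto_diff\<close>)

lemma limit_lt_1_if_k2_neg:
  assumes "k2 < 0"
  shows "l < 1"
proof -
  interpret reflected: radial_two_phase_flow "\<lambda>s. f2 (1 - s)" "\<lambda>s. f1 (1 - s)" "\<lambda>s. d (1 - s)"
    h2 h1 "\<lambda>r. 1 - S r" "\<lambda>r. - S' r" r0 k2 k1 "1 - l"
    by (rule reflected)
  have "1 - l > 0" using assms by (rule reflected.limit_pos_if_k1_neg)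
  then show ?thesis by simp
qed

lemma limit_eq_1_if_h1_nonpos_h2_nonneg:
  assumes h: "\<forall>\<^sub>F r in at_top. h1 r \<le> 0 \<and> 0 \<le> h2 r" and k: "k1 \<noteq> 0 \<or> k2 \<noteq> 0"
  shows "l = 1"
proof (rule ccontr)
  have "\<forall>\<^sub>F r in at_top. h1 r / f1 (S r) \<le> h2 r / f2 (S r)"
    using h eventually_ge_at_top[of r0]
  proof eventually_elim
    case (elim r)
    then have "f1 (S r) > 0" "f2 (S r) > 0" using S_range f1_pos f2_pos by force+
    with elim show ?case by (meson divide_nonneg_pos divide_nonpos_pos order_trans)
  qed
  then have "l > 0" by (rule limit_pos_if_eventually_nondecreasing)
  moreover assume "l \<noteq> 1"
  ultimately have l: "l \<in> {0<..<1}" using limit_in_unit_interval by simp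
  have "\<forall>\<^sub>F r in at_top. h1 r \<le> 0" "\<forall>\<^sub>F r in at_top. 0 \<le> h2 r" using h by (auto elim: eventually_mono)
  then have "k1 \<le> 0" "0 \<le> k2"
    using tendsto_upperbound[OF h1_lim _ trivial_limit_at_top_linorder]
      tendsto_lowerbound[OF h2_lim _ trivial_limit_at_top_linorder] by auto
  moreover have "f1 l > 0" "f2 l > 0" using l f1_pos f2_pos by auto
  ultimately have "k1 / f1 l \<le> 0" "0 \<le> k2 / f2 l"
    by (simp_all add: divide_nonpos_pos divide_nonneg_pos)
  with interior_limit_balance[OF l] have "k1 / f1 l = 0" "k2 / f2 l = 0" by simp_all
  with \<open>f1 l > 0\<close> \<open>f2 l > 0\<close> k show False by simp
qed

lemma limit_eq_0_if_h1_nonneg_h2_nonpos: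
  assumes "\<forall>\<^sub>F r in at_top. 0 \<le> h1 r \<and> h2 r \<le> 0" and "k1 \<noteq> 0 \<or> k2 \<noteq> 0"
  shows "l = 0"
proof -
  interpret reflected: radial_two_phase_flow "\<lambda>s. f2 (1 - s)" "\<lambda>s. f1 (1 - s)" "\<lambda>s. d (1 - s)"
    h2 h1 "\<lambda>r. 1 - S r" "\<lambda>r. - S' r" r0 k2 k1 "1 - l"
    by (rule reflected)
  have "\<forall>\<^sub>F r in at_top. h2 r \<le> 0 \<and> 0 \<le> h1 r" using assms(1) by eventually_elim simp
  then have "1 - l = 1"
    by (rule reflected.limit_eq_1_if_h1_nonpos_h2_nonneg) (use assms(2) in auto)
  then show ?thesis by simp
qed

lemma limit_in_interior_if_k1_k2_neg:
  assumes "k1 < 0" and "k2 < 0"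
  shows "l \<in> {0<..<1}"
  using limit_pos_if_k1_neg[OF assms(1)] limit_lt_1_if_k2_neg[OF assms(2)] by simp

lemma ratio_at_interior_limit:
  assumes "l \<in> {0<..<1}" and "k2 \<noteq> 0"
  shows "f1 l / f2 l = k1 / k2"
proof -
  have "f1 l > 0" "f2 l > 0" using assms(1) f1_pos f2_pos by auto
  with interior_limit_balance[OF assms(1)] assms(2) show ?thesis by (simp add: field_simps)
qed

end

theorem theorem2p5:
  fixes a01 a02 :: real and a1 a2 \<alpha>1 \<alpha>2 :: "nat \<Rightarrow> real" and N1 N2 :: nat
    and f1 f2 f1' f2' pc dpc ddpc :: "real \<Rightarrow> real"
    and c1 c2 r0 s0 s_inf :: real and S S' :: "real \<Rightarrow> real"
  assumes g1: "admissible_g a01 a1 \<alpha>1 N1"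
    and g2: "admissible_g a02 a2 \<alpha>2 N2"
    \<comment> \<open>Assumption A\<close>
    and f1_cont: "continuous_on {0..1} f1" and f2_cont: "continuous_on {0..1} f2"
    and f1_der: "\<And>x. x \<in> {0<..<1} \<Longrightarrow> (f1 has_real_derivative f1' x) (at x)"
    and f2_der: "\<And>x. x \<in> {0<..<1} \<Longrightarrow> (f2 has_real_derivative f2' x) (at x)"
    and f1'_cont: "continuous_on {0<..<1} f1'" and f2'_cont: "continuous_on {0<..<1} f2'"
    and f1_0: "f1 0 = 0" and f2_1: "f2 1 = 0"
    and f1'_pos: "\<And>x. x \<in> {0<..<1} \<Longrightarrow> f1' x > 0"
    and f2'_neg: "\<And>x. x \<in> {0<..<1} \<Longrightarrow> f2' x < 0"
    \<comment> \<open>Assumption B: p_c' exists on (0,1), is C^1 there and positive\<close>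
    and pc_der: "\<And>x. x \<in> {0<..<1} \<Longrightarrow> (pc has_real_derivative dpc x) (at x)"
    and dpc_der: "\<And>x. x \<in> {0<..<1} \<Longrightarrow> (dpc has_real_derivative ddpc x) (at x)"
    and ddpc_cont: "continuous_on {0<..<1} ddpc"
    and dpc_pos: "\<And>x. x \<in> {0<..<1} \<Longrightarrow> dpc x > 0"
    \<comment> \<open>parameters\<close>
    and c_nz: "c1\<^sup>2 + c2\<^sup>2 > 0"
    and r0_pos: "r0 > 0"
    \<comment> \<open>S solves (IVP) with n = 2 on [r0, \<infinity>)\<close>
    and S_cont: "continuous_on {r0..} S"
    and S_der: "\<And>r. r > r0 \<Longrightarrow> (S has_real_derivative S' r) (at r)"
    and S_ode: "\<And>r. r > r0 \<Longrightarrow>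
        S' r = Gfun a02 a2 \<alpha>2 N2 (c2 * r powr (1 - 2)) * (1 / (dpc (S r) * f2 (S r)))
             - Gfun a01 a1 \<alpha>1 N1 (c1 * r powr (1 - 2)) * (1 / (dpc (S r) * f1 (S r)))"
    and S_init: "S r0 = s0" and s0_in: "s0 \<in> {0<..<1}"
    and S_range: "\<And>r. r \<ge> r0 \<Longrightarrow> 0 < S r \<and> S r < 1"
    and S_lim: "(S \<longlongrightarrow> s_inf) at_top"
  shows "(c1 \<le> 0 \<and> c2 \<ge> 0 \<longrightarrow> s_inf = 1)
       \<and> (c1 \<ge> 0 \<and> c2 \<le> 0 \<longrightarrow> s_inf = 0)
       \<and> (c1 < 0 \<and> c2 < 0 \<longrightarrow> s_inf = sstar f1 f2 c1 c2 a01 a02)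
       \<and> (c1 > 0 \<and> c2 > 0 \<longrightarrow> s_inf \<in> {0, 1, sstar f1 f2 c1 c2 a01 a02})"
proof -
  define h1 where "h1 r = r * Gfun a01 a1 \<alpha>1 N1 (c1 * r powr (1 - 2))" for r
  define h2 where "h2 r = r * Gfun a02 a2 \<alpha>2 N2 (c2 * r powr (1 - 2))" for r
  interpret radial_two_phase_flow f1 f2 dpc h1 h2 S S' r0 "c1 * a01" "c2 * a02" s_inf
  proof
    show "strict_mono_on {0..1} f1" by (rule strict_mono_on_if_deriv_pos[OF f1_cont f1_der f1'_pos])
    show "strict_antimono_on {0..1} f2" by (rule strict_antimono_on_if_deriv_neg[OF f2_cont f2_der f2'_neg])
    show "continuous_on {0<..<1} dpc" by (rule has_real_derivative_imp_continuous_on[OF dpc_der])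
    show "(h1 \<longlongrightarrow> c1 * a01) at_top" unfolding h1_def by (rule tendsto_scaled_Gfun[OF g1])
    show "(h2 \<longlongrightarrow> c2 * a02) at_top" unfolding h2_def by (rule tendsto_scaled_Gfun[OF g2])
    fix r assume "r > r0"
    then show "S' r = (h2 r / f2 (S r) - h1 r / f1 (S r)) / (r * dpc (S r))"
      using r0_pos unfolding S_ode[OF \<open>r > r0\<close>] h1_def h2_def by (simp add: diff_divide_distrib mult.commute)
  qed (use f1_cont f2_cont f1_0 f2_1 dpc_pos r0_pos S_der S_range S_lim in auto)
  have sign_h: "\<forall>\<^sub>F r in at_top. (h1 r \<le> 0 \<longleftrightarrow> c1 \<le> 0) \<and> (0 \<le> h1 r \<longleftrightarrow> 0 \<le> c1)
                  \<and> (h2 r \<le> 0 \<longleftrightarrow> c2 \<le> 0) \<and> (0 \<le> h2 r \<longleftrightarrow> 0 \<le> c2)"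
    using eventually_gt_at_top[of 0]
    by eventually_elim (simp only: h1_def h2_def scaled_Gfun_sign_iff[OF g1] scaled_Gfun_sign_iff[OF g2])
  have k_ne: "c1 * a01 \<noteq> 0 \<or> c2 * a02 \<noteq> 0"
    and k_neg: "c1 < 0 \<Longrightarrow> c1 * a01 < 0" "c2 < 0 \<Longrightarrow> c2 * a02 < 0"
    using c_nz g1 g2 by (auto simp: admissible_g_def mult_neg_pos)
  have interior: "s_inf = sstar f1 f2 c1 c2 a01 a02" if "s_inf \<in> {0<..<1}" "c2 \<noteq> 0"
    using ratio_at_interior_limit[OF that(1)] sstar_eqI[OF that(1)] that(2) g2
    by (simp add: admissible_g_def)
  show ?thesis
  proof (intro conjI impI)
    assume c: "c1 \<le> 0 \<and> c2 \<ge> 0"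
    have "\<forall>\<^sub>F r in at_top. h1 r \<le> 0 \<and> 0 \<le> h2 r" using sign_h by eventually_elim (use c in simp)
    then show "s_inf = 1" using k_ne by (rule limit_eq_1_if_h1_nonpos_h2_nonneg)
  next
    assume c: "c1 \<ge> 0 \<and> c2 \<le> 0"
    have "\<forall>\<^sub>F r in at_top. 0 \<le> h1 r \<and> h2 r \<le> 0" using sign_h by eventually_elim (use c in simp)
    then show "s_inf = 0" using k_ne by (rule limit_eq_0_if_h1_nonneg_h2_nonpos)
  next
    assume "c1 < 0 \<and> c2 < 0"
    then show "s_inf = sstar f1 f2 c1 c2 a01 a02"
      using interior limit_in_interior_if_k1_k2_neg k_neg by simp
  next
    assume "c1 > 0 \<and> c2 > 0"
    then show "s_inf \<in> {0, 1, sstar f1 f2 c1 c2 a01 a02}"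
      using interior limit_in_unit_interval by fastforce
  qed
qed

end
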